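(* Let $n\ge 5$ and let $\sigma$ be a maximal simplex of $\Delta_n$. Suppose there are a vertex $v$, distinct $i_0,j_0,k_0\in[n]$, and distinct $p_0,q_0\in[n]\setminus\{i_0,j_0,k_0\}$ such that $\{v^{i_0,j_0},v^{i_0,k_0},v^{j_0,k_0},v^{p_0},v^{q_0}\}\subseteq\sigma$. Then $\sigma=N(v)\cup K_v^{i_0,j_0,k_0}$.
   Context: $\mathbb{I}_n$ is the $n$-dimensional hypercube graph on vertex set $\{0,1\}^n$ (adjacent iff differing in exactly one coordinate), with Hamming distance $d(v,w)=\#\{i: v(i)\ne w(i)\}$. $\Delta_n=\mathcal{VR}(\mathbb{I}_n;3)$ is the simplicial complex whose simplices are the subsets $\sigma\subseteq\{0,1\}^n$ with $d(x,y)\le 3$ for all $x,y\in\sigma$. $[n]=\{1,\dots,n\}$. For a vertex $v$ and distinct $i_1,\dots,i_k$, $v^{i_1,\dots,i_k}$ is $v$ with exactly coordinates $i_1,\dots,i_k$ changed. $N(v)=\{v^i:i\in[n]\}$. For distinct $i,j,k$, $K_v^{i,j,k}=\{v,v^{i,j},v^{j,k},v^{i,k}\}$. *)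

theory Defs
  imports Main
begin

text \<open>Vertices of the hypercube I_n: elements of {0,1}^n, encoded by their support,
  i.e. subsets of {1..n} (coordinate i is 1 iff i is in the set).\<close>

definition cube_vertices :: "nat \<Rightarrow> nat set set" where
  "cube_vertices n = Pow {1..n}"

definition hdist :: "nat set \<Rightarrow> nat set \<Rightarrow> nat" where
  "hdist v w = card ((v - w) \<union> (w - v))"

definition flip :: "nat set \<Rightarrow> nat \<Rightarrow> nat set" where
  "flip v i = (if i \<in> v then v - {i} else insert i v)"

text \<open>Simplices of Delta_n = VR(I_n;3): nonempty (finite) sets of vertices with pairwise
  Hamming distance at most 3.\<close>
definition is_simplex :: "nat \<Rightarrow> nat set set \<Rightarrow> bool" where
  "is_simplex n \<sigma> \<longleftrightarrow> \<sigma> \<noteq> {} \<and> \<sigma> \<subseteq> cube_vertices n \<and>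
     (\<forall>x\<in>\<sigma>. \<forall>y\<in>\<sigma>. hdist x y \<le> 3)"

definition maximal_simplex :: "nat \<Rightarrow> nat set set \<Rightarrow> bool" where
  "maximal_simplex n \<sigma> \<longleftrightarrow> is_simplex n \<sigma> \<and>
     (\<forall>\<tau>. is_simplex n \<tau> \<and> \<sigma> \<subseteq> \<tau> \<longrightarrow> \<tau> = \<sigma>)"

definition nbhd :: "nat \<Rightarrow> nat set \<Rightarrow> nat set set" where
  "nbhd n v = {flip v i | i. i \<in> {1..n}}"

definition Kset :: "nat set \<Rightarrow> nat \<Rightarrow> nat \<Rightarrow> nat \<Rightarrow> nat set set" where
  "Kset v i j k = {v, flip (flip v i) j, flip (flip v j) k, flip (flip v i) k}"

end

theory Submission
  imports Defs
begin

text \<open>Measure every vertex w by its offset A = w \<triangle> v from v, so that w = v \<triangle> A and the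
  Hamming distance of two vertices is the size of the symmetric difference of their offsets.
  Being within distance 3 of the offsets {i,j}, {i,k}, {j,k}, {p}, {q} forces an offset of
  size at most one or one of the three pairs; so \<sigma> lies inside N(v) \<union> K_v^{i,j,k}. The
  latter is itself a simplex, because two offsets of size \<le> 1 and \<le> 2 differ in at most
  three coordinates and two pairs inside {i,j,k} differ only within {i,j,k}. Maximality of
  \<sigma> then gives equality.\<close>

lemma card_sym_diff_add_twice_card_Int:
  assumes "finite A" "finite B"
  shows "card (sym_diff A B) + 2 * card (A \<inter> B) = card A + card B"
proof -
  have "sym_diff A B = (A \<union> B) - (A \<inter> B)" by auto
  then have "card (sym_diff A B) = card (A \<union> B) - card (A \<inter> B)"
    by (metis assms card_Diff_subset finite_Int inf_sup_ord(1,3) order_trans)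
  moreover have "card (A \<inter> B) \<le> card (A \<union> B)" using assms by (intro card_mono) auto
  ultimately show ?thesis using card_Un_Int[OF assms] by simp
qed

lemma hdist_sym_diff_cancel: "hdist (sym_diff v A) (sym_diff v B) = hdist A B"
  unfolding hdist_def by (rule arg_cong[where f = card]) auto

lemma flip_eq_sym_diff: "flip v i = sym_diff v {i}"
  unfolding flip_def by auto

lemma flip_flip_eq_sym_diff: "i \<noteq> j \<Longrightarrow> flip (flip v i) j = sym_diff v {i, j}"
  unfolding flip_def by auto

lemma card_bound_near_singleton:
  assumes "finite A" "hdist A {x} \<le> d"
  shows "card A \<le> d + 1" and "x \<notin> A \<Longrightarrow> card A + 1 \<le> d"
proof -
  have "card (A \<inter> {x}) \<le> 1" by (simp add: card_le_Suc0_iff_eq)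
  moreover have "x \<notin> A \<Longrightarrow> A \<inter> {x} = {}" by auto
  ultimately show "card A \<le> d + 1" and "x \<notin> A \<Longrightarrow> card A + 1 \<le> d"
    using card_sym_diff_add_twice_card_Int[OF assms(1), of "{x}"] assms(2)
    by (auto simp: hdist_def)
qed

lemma card_bound_near_pair:
  assumes "finite A" "x \<noteq> y" "hdist A {x, y} \<le> d"
  shows "x \<notin> A \<Longrightarrow> y \<notin> A \<Longrightarrow> card A + 2 \<le> d" and "\<not> {x, y} \<subseteq> A \<Longrightarrow> card A \<le> d"
proof -
  have eq: "card A + 2 = hdist A {x, y} + 2 * card (A \<inter> {x, y})"
    using card_sym_diff_add_twice_card_Int[OF assms(1), of "{x, y}"] assms(2)
    by (simp add: hdist_def)
  show "x \<notin> A \<Longrightarrow> y \<notin> A \<Longrightarrow> card A + 2 \<le> d"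
  proof -
    assume "x \<notin> A" "y \<notin> A"
    then have "A \<inter> {x, y} = {}" by auto
    then show ?thesis using eq assms(3) by simp
  qed
  show "\<not> {x, y} \<subseteq> A \<Longrightarrow> card A \<le> d"
  proof -
    assume "\<not> {x, y} \<subseteq> A"
    then have "card (A \<inter> {x, y}) \<le> 1" by (auto simp: card_le_Suc0_iff_eq)
    then show ?thesis using eq assms(3) by simp
  qed
qed

lemma offset_near_pairs_and_singletons:
  assumes "finite A" and "distinct [i, j, k, p, q]"
    and ij: "hdist A {i, j} \<le> 3" and ik: "hdist A {i, k} \<le> 3" and jk: "hdist A {j, k} \<le> 3"
    and p: "hdist A {p} \<le> 3" and q: "hdist A {q} \<le> 3"
  shows "card A \<le> 1 \<or> A \<in> {{i, j}, {i, k}, {j, k}}"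
proof (cases "card A \<le> 1")
  case False
  note pair = card_bound_near_pair[OF \<open>finite A\<close>]
    and single = card_bound_near_singleton[OF \<open>finite A\<close>]
  have "i \<in> A \<or> j \<in> A" "i \<in> A \<or> k \<in> A" "j \<in> A \<or> k \<in> A"
    using pair(1)[OF _ ij] pair(1)[OF _ ik] pair(1)[OF _ jk] assms(2) \<open>\<not> card A \<le> 1\<close>
    by auto
  then obtain B where B: "B \<in> {{i, j}, {i, k}, {j, k}}" "B \<subseteq> A" by blast
  have card_B: "card B = 2" using B(1) assms(2) by auto
  have "\<not> {i, j, k, p, q} \<subseteq> A"
  proof
    assume "{i, j, k, p, q} \<subseteq> A"
    then have "card {i, j, k, p, q} \<le> card A" by (rule card_mono[OF \<open>finite A\<close>])
    then show False using single(1)[OF p] assms(2) by simp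
  qed
  then have "card A \<le> 3 \<or> \<not> {p, q} \<subseteq> A"
    using pair(2)[OF _ ij] pair(2)[OF _ ik] pair(2)[OF _ jk] assms(2) by auto
  then have "card A \<le> 3" using single(2)[OF p] single(2)[OF q] by auto
  have "card A \<le> 2"
  proof (rule ccontr)
    assume "\<not> card A \<le> 2"
    then have sub: "B \<union> {p, q} \<subseteq> A" using B(2) single(2)[OF p] single(2)[OF q] by auto
    have "card (B \<union> {p, q}) = 4"
    proof -
      have "finite B" using B(2) \<open>finite A\<close> finite_subset by blast
      moreover have "B \<inter> {p, q} = {}" using B(1) assms(2) by auto
      ultimately have "card (B \<union> {p, q}) = card B + card {p, q}" by (intro card_Un_disjoint) auto
      then show ?thesis using card_B assms(2) by simp
    qed
    then show False using card_mono[OF \<open>finite A\<close> sub] \<open>card A \<le> 3\<close> by simp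
  qed
  then have "A = B"
    using card_seteq[OF \<open>finite A\<close> B(2)] card_B \<open>\<not> card A \<le> 1\<close> by simp
  then show ?thesis using B(1) by simp
qed simp

definition star_offsets :: "nat \<Rightarrow> nat \<Rightarrow> nat \<Rightarrow> nat \<Rightarrow> nat set set" where
  "star_offsets n i j k = insert {} {{t} | t. t \<in> {1..n}} \<union> {{i, j}, {i, k}, {j, k}}"

lemma nbhd_Un_Kset_eq_star_offsets:
  assumes "i \<noteq> j" "i \<noteq> k" "j \<noteq> k"
  shows "nbhd n v \<union> Kset v i j k = sym_diff v ` star_offsets n i j k"
  unfolding star_offsets_def nbhd_def Kset_def flip_flip_eq_sym_diff[OF assms(1)]
    flip_flip_eq_sym_diff[OF assms(2)] flip_flip_eq_sym_diff[OF assms(3)]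
  unfolding flip_eq_sym_diff by auto

lemma star_offsets_close:
  assumes "A \<in> star_offsets n i j k" "B \<in> star_offsets n i j k"
  shows "hdist A B \<le> 3"
proof -
  have finite: "finite A" "finite B"
    using assms by (auto simp: star_offsets_def finite_subset)
  have shape: "card C \<le> 1 \<or> C \<subseteq> {i, j, k} \<and> card C \<le> 2" if "C \<in> star_offsets n i j k" for C
    using that by (auto simp: star_offsets_def card_insert_if)
  show ?thesis
  proof (cases "A \<subseteq> {i, j, k} \<and> B \<subseteq> {i, j, k}")
    case True
    then have "hdist A B \<le> card {i, j, k}" unfolding hdist_def by (intro card_mono) auto
    also have "\<dots> \<le> 3" by (simp add: card_insert_if)
    finally show ?thesis .
  next
    case False
    then show ?thesis
      using card_sym_diff_add_twice_card_Int[OF finite] shape[OF assms(1)] shape[OF assms(2)]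
      unfolding hdist_def by linarith
  qed
qed

lemma is_simplex_star_offsets:
  assumes "v \<in> cube_vertices n" "i \<in> {1..n}" "j \<in> {1..n}" "k \<in> {1..n}"
  shows "is_simplex n (sym_diff v ` star_offsets n i j k)"
  unfolding is_simplex_def
proof (intro conjI ballI)
  show "sym_diff v ` star_offsets n i j k \<noteq> {}" by (simp add: star_offsets_def)
  show "sym_diff v ` star_offsets n i j k \<subseteq> cube_vertices n"
    using assms by (auto simp: star_offsets_def cube_vertices_def)
next
  fix x y assume "x \<in> sym_diff v ` star_offsets n i j k" "y \<in> sym_diff v ` star_offsets n i j k"
  then show "hdist x y \<le> 3"
    by (auto simp: hdist_sym_diff_cancel intro: star_offsets_close)
qed

lemma simplex_subset_star_offsets:
  assumes "is_simplex n \<sigma>" "sym_diff v ` {{i, j}, {i, k}, {j, k}, {p}, {q}} \<subseteq> \<sigma>"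
    and "v \<in> cube_vertices n" "distinct [i, j, k, p, q]"
  shows "\<sigma> \<subseteq> sym_diff v ` star_offsets n i j k"
proof
  fix w assume "w \<in> \<sigma>"
  define A where "A = sym_diff v w"
  have w_eq: "w = sym_diff v A" unfolding A_def by auto
  have A_sub: "A \<subseteq> {1..n}"
    using assms(1,3) \<open>w \<in> \<sigma>\<close> by (auto simp: A_def is_simplex_def cube_vertices_def)
  have "hdist A B \<le> 3" if "sym_diff v B \<in> \<sigma>" for B
    using assms(1) \<open>w \<in> \<sigma>\<close> that unfolding is_simplex_def
    by (metis w_eq hdist_sym_diff_cancel)
  then have "card A \<le> 1 \<or> A \<in> {{i, j}, {i, k}, {j, k}}"
    using assms(2) A_sub
    by (intro offset_near_pairs_and_singletons[OF _ assms(4)]) (auto intro: finite_subset)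
  moreover have "A = {} \<or> (\<exists>t. A = {t})" if "card A \<le> 1"
    using that A_sub finite_subset[OF A_sub]
    by (metis One_nat_def card_1_singletonE card_0_eq finite_atLeastAtMost le_SucE le_zero_eq)
  ultimately consider "A = {}" | t where "A = {t}" | "A \<in> {{i, j}, {i, k}, {j, k}}" by blast
  then have "A \<in> star_offsets n i j k"
    by cases (use A_sub in \<open>auto simp: star_offsets_def\<close>)
  then show "w \<in> sym_diff v ` star_offsets n i j k" using w_eq by blast
qed

theorem mainTheorem15:
  fixes n :: nat and \<sigma> :: "nat set set" and v :: "nat set"
    and i0 j0 k0 p0 q0 :: nat
  assumes "n \<ge> 5"
    and "maximal_simplex n \<sigma>"
    and "v \<in> cube_vertices n"
    and "i0 \<in> {1..n}" and "j0 \<in> {1..n}" and "k0 \<in> {1..n}"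
    and "i0 \<noteq> j0" and "i0 \<noteq> k0" and "j0 \<noteq> k0"
    and "p0 \<in> {1..n} - {i0, j0, k0}" and "q0 \<in> {1..n} - {i0, j0, k0}"
    and "p0 \<noteq> q0"
    and "{flip (flip v i0) j0, flip (flip v i0) k0, flip (flip v j0) k0,
          flip v p0, flip v q0} \<subseteq> \<sigma>"
  shows "\<sigma> = nbhd n v \<union> Kset v i0 j0 k0"
proof -
  let ?S = "sym_diff v ` star_offsets n i0 j0 k0"
  have distinct: "distinct [i0, j0, k0, p0, q0]" using assms(7-12) by auto
  have "is_simplex n \<sigma>" using assms(2) by (simp add: maximal_simplex_def)
  moreover have "sym_diff v ` {{i0, j0}, {i0, k0}, {j0, k0}, {p0}, {q0}} \<subseteq> \<sigma>"
    using assms(13)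
    unfolding flip_flip_eq_sym_diff[OF assms(7)] flip_flip_eq_sym_diff[OF assms(8)]
      flip_flip_eq_sym_diff[OF assms(9)]
    unfolding flip_eq_sym_diff by simp
  ultimately have "\<sigma> \<subseteq> ?S" using assms(3) distinct by (rule simplex_subset_star_offsets)
  moreover have "is_simplex n ?S" using assms(3-6) by (rule is_simplex_star_offsets)
  ultimately have "\<sigma> = ?S" using assms(2) unfolding maximal_simplex_def by blast
  then show ?thesis using assms(7-9) by (simp add: nbhd_Un_Kset_eq_star_offsets)
qed

end
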